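(* Let $K$ be an algebraically closed field of characteristic $0$ and let $X$ be a finite set of distinct points in $\mathbb{P}^1\times\mathbb{P}^1\times\mathbb{P}^1$ over $K$, with $t_1=|\pi_1(X)|$ and $t_2=|\pi_2(X)|$. Suppose $\mathcal{L}$ is a line of type $(1,1,0)$ with $X\cap\mathcal{L}\neq\emptyset$ but $X\not\subseteq\mathcal{L}$. Set $X_2=X\cap\mathcal{L}$ and $X_1=X\setminus X_2$. Then $R_{t_1-1,t_2-1,0}=(I(X_1)+I(X_2))_{t_1-1,t_2-1,0}$. Consequently, $\dim_K\big(R/(I(X_1)+I(X_2))\big)_{t_1-1,t_2-1,k}=0$ for all $k\ge0$.
   Context: Let $R=K[x_0,x_1,y_0,y_1,z_0,z_1]$ be $\mathbb{N}^3$-graded with $\deg x_i=(1,0,0)$, $\deg y_i=(0,1,0)$, $\deg z_i=(0,0,1)$. For a point $P=[a_0:a_1]\times[b_0:b_1]\times[c_0:c_1]$, $I(P)=(a_1x_0-a_0x_1,\,b_1y_0-b_0y_1,\,c_1z_0-c_0z_1)$, and for a finite set $Y=\{P_1,\dots,P_s\}$, $I(Y)=\bigcap_i I(P_i)$. $\pi_i$ denotes the projection onto the $i$-th factor $\mathbb{P}^1$. A line of type $(1,1,0)$ is the subvariety defined by an ideal $(L,L')$ with $L\in R_{1,0,0}$, $L'\in R_{0,1,0}$ nonzero. *)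

theory Defs
  imports "HOL-Library.Poly_Mapping" "HOL-Computational_Algebra.Polynomial"
begin

text \<open>The polynomial ring R = K[x0,x1,y0,y1,z0,z1] is modelled inside
  the type of finitely supported polynomials (nat \<Rightarrow>0 nat) \<Rightarrow>0 K, using only
  the variables 0..5, with x0 = 0, x1 = 1, y0 = 2, y1 = 3, z0 = 4, z1 = 5.\<close>

type_synonym 'a mpoly6 = "(nat \<Rightarrow>\<^sub>0 nat) \<Rightarrow>\<^sub>0 'a"

definition Var :: "nat \<Rightarrow> 'a::comm_ring_1 mpoly6" where
  "Var i = Poly_Mapping.single (Poly_Mapping.single i 1) 1"

definition Const :: "'a::comm_ring_1 \<Rightarrow> 'a mpoly6" where
  "Const c = Poly_Mapping.single 0 c"

definition mono6 :: "(nat \<Rightarrow>\<^sub>0 nat) \<Rightarrow> bool" where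
  "mono6 m \<longleftrightarrow> (\<forall>i. 6 \<le> i \<longrightarrow> Poly_Mapping.lookup m i = 0)"

definition tridegree :: "(nat \<Rightarrow>\<^sub>0 nat) \<Rightarrow> nat \<times> nat \<times> nat" where
  "tridegree m = (Poly_Mapping.lookup m 0 + Poly_Mapping.lookup m 1, Poly_Mapping.lookup m 2 + Poly_Mapping.lookup m 3, Poly_Mapping.lookup m 4 + Poly_Mapping.lookup m 5)"

definition Rring :: "'a::comm_ring_1 mpoly6 set" where
  "Rring = {f. \<forall>m\<in>Poly_Mapping.keys f. mono6 m}"

definition Rdeg :: "nat \<times> nat \<times> nat \<Rightarrow> 'a::comm_ring_1 mpoly6 set" where
  "Rdeg d = {f. \<forall>m\<in>Poly_Mapping.keys f. mono6 m \<and> tridegree m = d}"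

definition gen_ideal :: "'a::comm_ring_1 mpoly6 set \<Rightarrow> 'a mpoly6 set" where
  "gen_ideal G = {(\<Sum>g\<in>S. c g * g) | S c. finite S \<and> S \<subseteq> G \<and> (\<forall>g\<in>S. c g \<in> Rring)}"

definition ideal_sum :: "'a::comm_ring_1 mpoly6 set \<Rightarrow> 'a mpoly6 set \<Rightarrow> 'a mpoly6 set" where
  "ideal_sum I J = {f + g | f g. f \<in> I \<and> g \<in> J}"

text \<open>Points of P1 x P1 x P1 are given by representatives ((a0,a1),(b0,b1),(c0,c1)).\<close>
type_synonym 'a pt3 = "('a \<times> 'a) \<times> ('a \<times> 'a) \<times> ('a \<times> 'a)"

definition valid_pt :: "'a::field pt3 \<Rightarrow> bool" where
  "valid_pt P \<longleftrightarrow> fst P \<noteq> (0,0) \<and> fst (snd P) \<noteq> (0,0) \<and> snd (snd P) \<noteq> (0,0)"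

text \<open>The point of P1 represented by a nonzero vector v (its set of representatives).\<close>
definition proj_class :: "'a::field \<times> 'a \<Rightarrow> ('a \<times> 'a) set" where
  "proj_class v = {w. w \<noteq> (0,0) \<and> fst v * snd w = snd v * fst w}"

definition same_pt :: "'a::field pt3 \<Rightarrow> 'a pt3 \<Rightarrow> bool" where
  "same_pt P Q \<longleftrightarrow> proj_class (fst P) = proj_class (fst Q) \<and>
     proj_class (fst (snd P)) = proj_class (fst (snd Q)) \<and>
     proj_class (snd (snd P)) = proj_class (snd (snd Q))"

definition pi1 :: "'a::field pt3 \<Rightarrow> ('a \<times> 'a) set" where "pi1 P = proj_class (fst P)"
definition pi2 :: "'a::field pt3 \<Rightarrow> ('a \<times> 'a) set" where "pi2 P = proj_class (fst (snd P))"

definition ideal_pt :: "'a::field pt3 \<Rightarrow> 'a mpoly6 set" where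
  "ideal_pt P = (case P of ((a0,a1),(b0,b1),(c0,c1)) \<Rightarrow>
     gen_ideal {Const a1 * Var 0 - Const a0 * Var 1,
                Const b1 * Var 2 - Const b0 * Var 3,
                Const c1 * Var 4 - Const c0 * Var 5})"

definition ideal_pts :: "'a::field pt3 set \<Rightarrow> 'a mpoly6 set" where
  "ideal_pts Y = Rring \<inter> (\<Inter>P\<in>Y. ideal_pt P)"

definition coord :: "'a pt3 \<Rightarrow> nat \<Rightarrow> 'a::comm_ring_1" where
  "coord P i = (case P of ((a0,a1),(b0,b1),(c0,c1)) \<Rightarrow>
     (if i = 0 then a0 else if i = 1 then a1 else if i = 2 then b0 else if i = 3 then b1
      else if i = 4 then c0 else if i = 5 then c1 else 0))"

definition eval_pt :: "'a::comm_ring_1 mpoly6 \<Rightarrow> 'a pt3 \<Rightarrow> 'a" where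
  "eval_pt f P = (\<Sum>m\<in>Poly_Mapping.keys f. Poly_Mapping.lookup f m * (\<Prod>i\<in>Poly_Mapping.keys m. coord P i ^ Poly_Mapping.lookup m i))"

end

theory Submission
  imports Defs
begin

text \<open>Write \<open>L = c\<^sub>0x\<^sub>0 + c\<^sub>1x\<^sub>1\<close>, \<open>L' = d\<^sub>0y\<^sub>0 + d\<^sub>1y\<^sub>1\<close> and fix
  \<open>P\<^sub>0 \<in> X\<^sub>2\<close>. Let \<open>G\<close> be the product of the linear forms in \<open>x\<close> vanishing
  at the \<open>t\<^sub>1 - 1\<close> points of \<open>\<pi>\<^sub>1(X) - {\<pi>\<^sub>1(P\<^sub>0)}\<close>, and \<open>H\<close> the analogous
  product in \<open>y\<close>. A point of \<open>X\<^sub>1\<close> misses \<open>L\<close> or \<open>L'\<close>, so one of its first two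
  projections differs from that of \<open>P\<^sub>0\<close>; hence \<open>GH \<in> I(X\<^sub>1)\<close>, while
  \<open>L, L' \<in> I(X\<^sub>2)\<close>. Since \<open>L\<close> vanishes only at \<open>\<pi>\<^sub>1(P\<^sub>0)\<close>, each \<open>x\<^sub>i\<close> is a
  combination of \<open>L\<close> and any factor of \<open>G\<close>, and induction puts every \<open>x\<close>-monomial of
  degree \<open>t\<^sub>1 - 1\<close> into \<open>(G, L)\<close>; likewise for \<open>y\<close>. So every monomial of
  tridegree \<open>(t\<^sub>1 - 1, t\<^sub>2 - 1, k)\<close> lies in \<open>(GH, L, L') \<subseteq> I(X\<^sub>1) + I(X\<^sub>2)\<close>.\<close>

lemma lookup_Const_mult: "Poly_Mapping.lookup (Const c * p) m = c * Poly_Mapping.lookup p m"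
proof -
  have "Const c * p = Poly_Mapping.map ((*) c) p"
    by (simp add: Const_def mult_map_scale_conv_mult)
  thus ?thesis by (simp add: map.rep_eq when_def)
qed

lemma Const_mult: "Const a * Const b = Const (a * b)"
  by (simp add: Const_def mult_single)

lemma Const_0 [simp]: "Const 0 = 0"
  by (simp add: Const_def)

lemma Const_1 [simp]: "Const 1 = 1"
  by (simp add: Const_def)

lemma lookup_Var: "Poly_Mapping.lookup (Var i) m = (if m = Poly_Mapping.single i 1 then 1 else 0)"
  by (simp add: Var_def lookup_single when_def)

lemma mono6_add: "mono6 a \<Longrightarrow> mono6 b \<Longrightarrow> mono6 (a + b)"
  by (simp add: mono6_def lookup_add)

lemma mono6_single: "i < 6 \<Longrightarrow> mono6 (Poly_Mapping.single i n)"
  by (simp add: mono6_def lookup_single when_def)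

lemma Rring_mult: "f \<in> Rring \<Longrightarrow> g \<in> Rring \<Longrightarrow> f * g \<in> Rring"
  unfolding Rring_def using keys_mult[of f g] mono6_add by blast

lemma Rring_add: "f \<in> Rring \<Longrightarrow> g \<in> Rring \<Longrightarrow> f + g \<in> Rring"
  unfolding Rring_def using keys_add[of f g] by blast

lemma Rring_diff: "f \<in> Rring \<Longrightarrow> g \<in> Rring \<Longrightarrow> f - g \<in> Rring"
  unfolding Rring_def using keys_diff[of f g] by blast

lemma Rring_0: "0 \<in> Rring"
  by (simp add: Rring_def)

lemma Rring_Const: "Const c \<in> Rring"
  by (simp add: Rring_def Const_def mono6_def)

lemma Rring_Var: "i < 6 \<Longrightarrow> Var i \<in> Rring"
  by (simp add: Rring_def Var_def mono6_def lookup_single when_def)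

lemma Rring_single: "mono6 m \<Longrightarrow> Poly_Mapping.single m c \<in> Rring"
  by (simp add: Rring_def)

lemma Rring_prod: "(\<And>s. s \<in> S \<Longrightarrow> f s \<in> Rring) \<Longrightarrow> prod f S \<in> Rring"
  by (induction S rule: infinite_finite_induct)
     (auto intro: Rring_mult simp: Rring_Const[of 1, simplified])

lemma less_6_cases: "(k::nat) < 6 \<Longrightarrow> k = 0 \<or> k = 1 \<or> k = 2 \<or> k = 3 \<or> k = 4 \<or> k = 5"
  by auto

lemma poly_mapping_sum_monomials:
  "F = (\<Sum>m\<in>Poly_Mapping.keys F. Const (Poly_Mapping.lookup F m) * Poly_Mapping.single m 1)"
  (is "F = ?S")
proof (rule poly_mapping_eqI)
  fix k
  have "Poly_Mapping.lookup ?S k = (\<Sum>m\<in>Poly_Mapping.keys F. if k = m then Poly_Mapping.lookup F m else 0)"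
    by (intro trans[OF lookup_sum] sum.cong) (auto simp: lookup_Const_mult lookup_single when_def)
  also have "\<dots> = Poly_Mapping.lookup F k"
    by (simp add: sum.delta in_keys_iff)
  finally show "Poly_Mapping.lookup F k = Poly_Mapping.lookup ?S k"
    by simp
qed

lemma gen_ideal_0: "0 \<in> gen_ideal G"
  unfolding gen_ideal_def by (rule CollectI, rule exI[of _ "{}"]) auto

lemma gen_ideal_generator_mult: "g \<in> G \<Longrightarrow> c \<in> Rring \<Longrightarrow> c * g \<in> gen_ideal G"
  unfolding gen_ideal_def
  by (rule CollectI, rule exI[of _ "{g}"], rule exI[of _ "\<lambda>_. c"]) auto

lemma gen_ideal_add:
  fixes f g :: "'a::comm_ring_1 mpoly6"
  assumes "f \<in> gen_ideal G" "g \<in> gen_ideal G"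
  shows "f + g \<in> gen_ideal G"
proof -
  obtain S c where S: "finite S" "S \<subseteq> G" "\<forall>x\<in>S. c x \<in> Rring" "f = (\<Sum>x\<in>S. c x * x)"
    using assms(1) by (auto simp: gen_ideal_def)
  obtain T d where T: "finite T" "T \<subseteq> G" "\<forall>x\<in>T. d x \<in> Rring" "g = (\<Sum>x\<in>T. d x * x)"
    using assms(2) by (auto simp: gen_ideal_def)
  define e :: "'a mpoly6 \<Rightarrow> 'a mpoly6"
    where "e x = (if x \<in> S then c x else 0) + (if x \<in> T then d x else 0)" for x
  have "(\<Sum>x\<in>S \<union> T. e x * x)
      = (\<Sum>x\<in>S \<union> T. if x \<in> S then c x * x else 0)
        + (\<Sum>x\<in>S \<union> T. if x \<in> T then d x * x else 0)"
    by (simp add: sum.distrib[symmetric] e_def distrib_right) (intro sum.cong; simp)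
  also have "\<dots> = f + g"
    using S T by (simp add: sum.inter_restrict[symmetric] Int_absorb1)
  finally show ?thesis
    unfolding gen_ideal_def using S T
    by (intro CollectI exI[of _ "S \<union> T"] exI[of _ e]) (auto simp: e_def intro: Rring_add Rring_0)
qed

lemma gen_ideal_mult:
  assumes "c \<in> Rring" "f \<in> gen_ideal G"
  shows "c * f \<in> gen_ideal G"
proof -
  obtain S d where S: "finite S" "S \<subseteq> G" "\<forall>x\<in>S. d x \<in> Rring" "f = (\<Sum>x\<in>S. d x * x)"
    using assms(2) by (auto simp: gen_ideal_def)
  have "c * f = (\<Sum>x\<in>S. (c * d x) * x)"
    by (simp add: S(4) sum_distrib_left mult.assoc)
  thus ?thesis
    unfolding gen_ideal_def using S assms(1)
    by (intro CollectI exI[of _ S] exI[of _ "\<lambda>x. c * d x"]) (auto intro: Rring_mult)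
qed

subsection \<open>Points of the projective line\<close>

definition class_rep :: "('a \<times> 'a) set \<Rightarrow> 'a \<times> 'a" where
  "class_rep C = (SOME w. w \<in> C)"

abbreviation lin_eval :: "'a::comm_ring_1 \<times> 'a \<Rightarrow> 'a \<times> 'a \<Rightarrow> 'a" where
  "lin_eval c a \<equiv> fst c * fst a + snd c * snd a"

lemma proportional_if_cross_eq:
  fixes a b :: "'a::field \<times> 'a"
  assumes "a \<noteq> (0,0)" "fst a * snd b = snd a * fst b"
  shows "\<exists>\<mu>. b = (\<mu> * fst a, \<mu> * snd a)"
proof (cases "fst a = 0")
  case True
  hence "snd a \<noteq> 0" "fst b = 0" using assms by (auto simp: prod_eq_iff)
  thus ?thesis using True by (intro exI[of _ "snd b / snd a"]) (simp add: prod_eq_iff)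
next
  case False
  thus ?thesis using assms(2)
    by (intro exI[of _ "fst b / fst a"]) (simp add: prod_eq_iff field_simps)
qed

lemma mem_proj_class_iff: "w \<in> proj_class a \<longleftrightarrow> w \<noteq> (0,0) \<and> fst a * snd w = snd a * fst w"
  by (simp add: proj_class_def)

lemma proj_class_eq_iff:
  fixes a b :: "'a::field \<times> 'a"
  assumes "a \<noteq> (0,0)" "b \<noteq> (0,0)"
  shows "proj_class a = proj_class b \<longleftrightarrow> fst a * snd b = snd a * fst b"
proof
  assume "proj_class a = proj_class b"
  moreover have "b \<in> proj_class b" using assms(2) by (simp add: mem_proj_class_iff mult.commute)
  ultimately have "b \<in> proj_class a" by simp
  thus "fst a * snd b = snd a * fst b" by (simp add: mem_proj_class_iff)
next
  assume "fst a * snd b = snd a * fst b"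
  then obtain \<mu> where b: "b = (\<mu> * fst a, \<mu> * snd a)"
    using proportional_if_cross_eq assms(1) by blast
  hence "\<mu> \<noteq> 0" using assms(2) by auto
  thus "proj_class a = proj_class b"
    unfolding set_eq_iff mem_proj_class_iff b by (auto simp: algebra_simps)
qed

lemma class_rep_mem: "a \<noteq> (0,0) \<Longrightarrow> class_rep (proj_class a) \<in> proj_class a"
  unfolding class_rep_def by (rule someI[of _ a]) (simp add: mem_proj_class_iff mult.commute)

lemma proj_class_class_rep:
  fixes a :: "'a::field \<times> 'a"
  assumes "a \<noteq> (0,0)"
  shows "proj_class (class_rep (proj_class a)) = proj_class a"
  using class_rep_mem[OF assms] assms
  by (subst proj_class_eq_iff) (auto simp: mem_proj_class_iff mult.commute)

lemma annihilator_proportional: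
  fixes a c :: "'a::field \<times> 'a"
  assumes "a \<noteq> (0,0)" "lin_eval c a = 0"
  shows "\<exists>\<kappa>. c = (\<kappa> * snd a, - \<kappa> * fst a)"
proof -
  have "(snd a, - fst a) \<noteq> (0,0)" using assms(1) by (auto simp: prod_eq_iff)
  moreover have "snd a * snd c = - fst a * fst c" using assms(2) by (simp add: algebra_simps add_eq_0_iff)
  ultimately show ?thesis using proportional_if_cross_eq[of "(snd a, - fst a)" c] by auto
qed

lemma lin_eval_eq_0_iff_same_class:
  fixes a b c :: "'a::field \<times> 'a"
  assumes "c \<noteq> (0,0)" "a \<noteq> (0,0)" "b \<noteq> (0,0)" "lin_eval c a = 0"
  shows "lin_eval c b = 0 \<longleftrightarrow> proj_class b = proj_class a"
proof -
  obtain \<kappa> where c: "c = (\<kappa> * snd a, - \<kappa> * fst a)"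
    using annihilator_proportional assms(2,4) by blast
  hence "\<kappa> \<noteq> 0" using assms(1) by auto
  hence "lin_eval c b = 0 \<longleftrightarrow> fst b * snd a = snd b * fst a"
    by (simp add: c algebra_simps right_minus_eq)
  thus ?thesis using proj_class_eq_iff[OF assms(3,2)] by simp
qed

lemma lin_eval_separates_classes:
  fixes c a0 :: "'a::field \<times> 'a"
  assumes "c \<noteq> (0,0)" "(0,0) \<notin> A" "a0 \<in> A" "lin_eval c a0 = 0"
  shows "\<forall>C\<in>proj_class ` A - {proj_class a0}. lin_eval c (class_rep C) \<noteq> 0"
    and "\<forall>a\<in>A. lin_eval c a \<noteq> 0 \<longrightarrow> proj_class a \<in> proj_class ` A - {proj_class a0}"
proof -
  have a0: "a0 \<noteq> (0,0)" using assms(2,3) by auto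
  show "\<forall>C\<in>proj_class ` A - {proj_class a0}. lin_eval c (class_rep C) \<noteq> 0"
  proof
    fix C assume "C \<in> proj_class ` A - {proj_class a0}"
    then obtain b where b: "b \<in> A" "C = proj_class b" "proj_class b \<noteq> proj_class a0" by blast
    have b0: "b \<noteq> (0,0)" using assms(2) b(1) by auto
    have "class_rep C \<noteq> (0,0)"
      using class_rep_mem[OF b0] b(2) by (simp add: mem_proj_class_iff)
    moreover have "proj_class (class_rep C) = proj_class b"
      using proj_class_class_rep[OF b0] b(2) by simp
    ultimately show "lin_eval c (class_rep C) \<noteq> 0"
      using lin_eval_eq_0_iff_same_class[OF assms(1) a0 _ assms(4)] b(3) by simp
  qed
  show "\<forall>a\<in>A. lin_eval c a \<noteq> 0 \<longrightarrow> proj_class a \<in> proj_class ` A - {proj_class a0}"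
  proof (intro ballI impI)
    fix a assume a: "a \<in> A" "lin_eval c a \<noteq> 0"
    moreover have "a \<noteq> (0,0)" using assms(2) a(1) by auto
    ultimately have "proj_class a \<noteq> proj_class a0"
      using lin_eval_eq_0_iff_same_class[OF assms(1) a0 _ assms(4)] by simp
    thus "proj_class a \<in> proj_class ` A - {proj_class a0}" using a(1) by blast
  qed
qed

subsection \<open>Binary forms modulo a linear form\<close>

definition lin_form :: "nat \<Rightarrow> nat \<Rightarrow> 'a \<times> 'a \<Rightarrow> 'a::comm_ring_1 mpoly6" where
  "lin_form u v c = Const (fst c) * Var u + Const (snd c) * Var v"

definition point_form :: "nat \<Rightarrow> nat \<Rightarrow> 'a \<times> 'a \<Rightarrow> 'a::comm_ring_1 mpoly6" where
  "point_form u v a = Const (snd a) * Var u - Const (fst a) * Var v"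

definition monomial2 :: "nat \<Rightarrow> nat \<Rightarrow> nat \<Rightarrow> nat \<Rightarrow> 'a::comm_ring_1 mpoly6" where
  "monomial2 u v i j = Poly_Mapping.single (Poly_Mapping.single u i + Poly_Mapping.single v j) 1"

lemma Rring_lin_form: "u < 6 \<Longrightarrow> v < 6 \<Longrightarrow> lin_form u v c \<in> Rring"
  by (simp add: lin_form_def Rring_add Rring_mult Rring_Const Rring_Var)

lemma Rring_point_form: "u < 6 \<Longrightarrow> v < 6 \<Longrightarrow> point_form u v a \<in> Rring"
  by (simp add: point_form_def Rring_diff Rring_mult Rring_Const Rring_Var)

lemma Rring_monomial2: "u < 6 \<Longrightarrow> v < 6 \<Longrightarrow> monomial2 u v i j \<in> Rring"
  by (simp add: monomial2_def Rring_single mono6_add mono6_single)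

lemma ideal_pt_eq_gen_ideal_point_forms:
  "ideal_pt P = gen_ideal {point_form 0 1 (fst P), point_form 2 3 (fst (snd P)), point_form 4 5 (snd (snd P))}"
  by (cases P) (auto simp: ideal_pt_def point_form_def)

lemma point_form_scale: "point_form u v (\<mu> * fst a, \<mu> * snd a) = Const \<mu> * point_form u v a"
  by (rule poly_mapping_eqI) (simp add: point_form_def lookup_Const_mult lookup_minus, simp add: algebra_simps)

lemma lin_form_annihilator:
  "lin_form u v (\<kappa> * snd a, - \<kappa> * fst a) = Const \<kappa> * point_form u v a"
  by (rule poly_mapping_eqI)
     (simp add: lin_form_def point_form_def lookup_Const_mult lookup_minus lookup_add,
      simp add: algebra_simps)

lemma lin_form_zero [simp]: "lin_form u v (0,0) = 0"
  by (simp add: lin_form_def)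

lemma Var_in_span_lin_form_point_form:
  fixes c w :: "'a::field \<times> 'a"
  assumes "lin_eval c w \<noteq> 0" "x = u \<or> x = v"
  shows "\<exists>\<alpha> \<beta>. Var x = Const \<alpha> * lin_form u v c + Const \<beta> * point_form u v w"
proof -
  define D where "D = lin_eval c w"
  have D: "D \<noteq> 0" using assms(1) by (simp add: D_def)
  have lookup: "Poly_Mapping.lookup (Const \<alpha> * lin_form u v c + Const \<beta> * point_form u v w) m
      = (\<alpha> * fst c + \<beta> * snd w) * Poly_Mapping.lookup (Var u) m
        + (\<alpha> * snd c - \<beta> * fst w) * Poly_Mapping.lookup (Var v) m" for \<alpha> \<beta> m
    by (simp add: lin_form_def point_form_def lookup_Const_mult lookup_minus lookup_add,
      simp add: algebra_simps)
  have "fst w / D * fst c + snd c / D * snd w = 1" "fst w / D * snd c - snd c / D * fst w = 0"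
    using D unfolding times_divide_eq_left add_divide_distrib[symmetric] diff_divide_distrib[symmetric]
    by (simp_all add: D_def algebra_simps)
  hence "Var u = Const (fst w / D) * lin_form u v c + Const (snd c / D) * point_form u v w"
    by (intro poly_mapping_eqI) (simp only: lookup, simp)
  moreover have "snd w / D * fst c + - fst c / D * snd w = 0" "snd w / D * snd c - - fst c / D * fst w = 1"
    using D unfolding times_divide_eq_left add_divide_distrib[symmetric] diff_divide_distrib[symmetric]
    by (simp_all add: D_def algebra_simps)
  hence "Var v = Const (snd w / D) * lin_form u v c + Const (- fst c / D) * point_form u v w"
    by (intro poly_mapping_eqI) (simp only: lookup, simp)
  ultimately show ?thesis using assms(2) by blast
qed

lemma monomial2_Suc_left: "monomial2 u v (Suc i) j = Var u * monomial2 u v i j"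
proof -
  have "Poly_Mapping.single u (Suc i) = Poly_Mapping.single u 1 + Poly_Mapping.single u i"
    by (simp add: single_add[symmetric])
  thus ?thesis by (simp add: monomial2_def Var_def mult_single add.assoc)
qed

lemma monomial2_Suc_right: "monomial2 u v i (Suc j) = Var v * monomial2 u v i j"
proof -
  have "Poly_Mapping.single v (Suc j) = Poly_Mapping.single v 1 + Poly_Mapping.single v j"
    by (simp add: single_add[symmetric])
  thus ?thesis by (simp add: monomial2_def Var_def mult_single add_ac)
qed

lemma monomial2_Suc_degree:
  assumes "i + j = Suc n"
  obtains x i' j' where "x = u \<or> x = v" "i' + j' = n" "monomial2 u v i j = Var x * monomial2 u v i' j'"
proof (cases i)
  case 0
  then obtain j' where "j = Suc j'" using assms by (cases j) auto
  thus ?thesis using that[of v i j'] 0 assms by (simp add: monomial2_Suc_right)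
next
  case (Suc i')
  thus ?thesis using that[of u i' j] assms by (simp add: monomial2_Suc_left)
qed

lemma monomial2_mod_lin_form:
  fixes c :: "'a::field \<times> 'a" and r :: "'b \<Rightarrow> 'a \<times> 'a"
  assumes "finite S" "\<forall>s\<in>S. lin_eval c (r s) \<noteq> 0" "u < 6" "v < 6" "i + j = card S"
  shows "\<exists>\<kappa> p. p \<in> Rring \<and>
    monomial2 u v i j = Const \<kappa> * (\<Prod>s\<in>S. point_form u v (r s)) + lin_form u v c * p"
  using assms(1,2,5)
proof (induction S arbitrary: i j rule: finite_induct)
  case empty
  thus ?case by (intro exI[of _ 1] exI[of _ 0]) (simp add: monomial2_def Rring_0)
next
  case (insert s S)
  define G where "G = (\<Prod>s\<in>S. point_form u v (r s) :: 'a mpoly6)"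
  define lw where "lw = (point_form u v (r s) :: 'a mpoly6)"
  define l where "l = (lin_form u v c :: 'a mpoly6)"
  have "i + j = Suc (card S)" using insert by simp
  then obtain x i' j' where x: "x = u \<or> x = v" "i' + j' = card S"
    and M: "monomial2 u v i j = Var x * (monomial2 u v i' j' :: 'a mpoly6)"
    by (rule monomial2_Suc_degree)
  obtain \<kappa> p where p: "p \<in> Rring" "monomial2 u v i' j' = Const \<kappa> * G + l * p"
    using insert.IH[OF _ x(2)] insert.prems by (auto simp: G_def l_def)
  obtain \<alpha> \<beta> where V: "Var x = Const \<alpha> * l + Const \<beta> * lw"
    using Var_in_span_lin_form_point_form[OF _ x(1), of c "r s"] insert.prems by (auto simp: l_def lw_def)
  have "monomial2 u v i j = (Const \<alpha> * l + Const \<beta> * lw) * (Const \<kappa> * G + l * p)"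
    using M V p(2) by simp
  also have "\<dots> = Const (\<beta> * \<kappa>) * (lw * G)
      + l * (Const \<alpha> * (Const \<kappa> * G + l * p) + Const \<beta> * lw * p)"
    unfolding Const_mult[symmetric] by algebra
  finally have "monomial2 u v i j
      = Const (\<beta> * \<kappa>) * (lw * G) + l * (Const \<alpha> * monomial2 u v i' j' + Const \<beta> * lw * p)"
    using p(2) by simp
  moreover have "Const \<alpha> * monomial2 u v i' j' + Const \<beta> * lw * p \<in> Rring"
    using p(1) assms(3,4)
    unfolding lw_def by (intro Rring_add Rring_mult Rring_Const Rring_monomial2 Rring_point_form)
  ultimately show ?case
    using insert.hyps by (auto simp: G_def lw_def l_def)
qed

lemma mono6_eq_monomial2_product:
  assumes "mono6 m"
  shows "Poly_Mapping.single m (1::'a::comm_ring_1) =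
    monomial2 0 1 (Poly_Mapping.lookup m 0) (Poly_Mapping.lookup m 1) *
    monomial2 2 3 (Poly_Mapping.lookup m 2) (Poly_Mapping.lookup m 3) *
    monomial2 4 5 (Poly_Mapping.lookup m 4) (Poly_Mapping.lookup m 5)"
proof -
  have "m = Poly_Mapping.single 0 (Poly_Mapping.lookup m 0) + Poly_Mapping.single 1 (Poly_Mapping.lookup m 1)
     + (Poly_Mapping.single 2 (Poly_Mapping.lookup m 2) + Poly_Mapping.single 3 (Poly_Mapping.lookup m 3))
     + (Poly_Mapping.single 4 (Poly_Mapping.lookup m 4) + Poly_Mapping.single 5 (Poly_Mapping.lookup m 5))"
    (is "m = ?m")
  proof (rule poly_mapping_eqI)
    fix k :: nat
    show "Poly_Mapping.lookup m k = Poly_Mapping.lookup ?m k"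
      using assms by (cases "k < 6")
        (auto simp: mono6_def lookup_add lookup_single when_def dest!: less_6_cases)
  qed
  thus ?thesis by (simp add: monomial2_def mult_single)
qed

lemma monomial_in_lin_ideal:
  fixes c d :: "'a::field \<times> 'a" and r1 :: "'b \<Rightarrow> 'a \<times> 'a" and r2 :: "'c \<Rightarrow> 'a \<times> 'a"
  assumes "finite S1" "\<forall>s\<in>S1. lin_eval c (r1 s) \<noteq> 0"
    and "finite S2" "\<forall>s\<in>S2. lin_eval d (r2 s) \<noteq> 0"
    and "mono6 m" "tridegree m = (card S1, card S2, k)"
  shows "\<exists>r p q. r \<in> Rring \<and> p \<in> Rring \<and> q \<in> Rring \<and>
    Poly_Mapping.single m 1 = (\<Prod>s\<in>S1. point_form 0 1 (r1 s)) * (\<Prod>s\<in>S2. point_form 2 3 (r2 s)) * r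
      + lin_form 0 1 c * p + lin_form 2 3 d * q"
proof -
  define G where "G = (\<Prod>s\<in>S1. point_form 0 1 (r1 s) :: 'a mpoly6)"
  define H where "H = (\<Prod>s\<in>S2. point_form 2 3 (r2 s) :: 'a mpoly6)"
  obtain \<kappa> p where p: "p \<in> Rring"
      "monomial2 0 1 (Poly_Mapping.lookup m 0) (Poly_Mapping.lookup m 1) = Const \<kappa> * G + lin_form 0 1 c * p"
    using monomial2_mod_lin_form[OF assms(1,2), of 0 1 "Poly_Mapping.lookup m 0" "Poly_Mapping.lookup m 1"]
      assms(6) by (auto simp: G_def tridegree_def)
  obtain \<kappa>' q where q: "q \<in> Rring"
      "monomial2 2 3 (Poly_Mapping.lookup m 2) (Poly_Mapping.lookup m 3) = Const \<kappa>' * H + lin_form 2 3 d * q"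
    using monomial2_mod_lin_form[OF assms(3,4), of 2 3 "Poly_Mapping.lookup m 2" "Poly_Mapping.lookup m 3"]
      assms(6) by (auto simp: H_def tridegree_def)
  define z :: "'a mpoly6" where "z = monomial2 4 5 (Poly_Mapping.lookup m 4) (Poly_Mapping.lookup m 5)"
  define y where "y = Const \<kappa>' * H + lin_form 2 3 d * q"
  have "Poly_Mapping.single m 1 = (Const \<kappa> * G + lin_form 0 1 c * p) * y * z"
    unfolding z_def y_def p(2)[symmetric] q(2)[symmetric] by (rule mono6_eq_monomial2_product[OF assms(5)])
  also have "\<dots> = G * H * (Const \<kappa> * Const \<kappa>' * z) + lin_form 0 1 c * (p * y * z)
      + lin_form 2 3 d * (Const \<kappa> * G * q * z)"
    unfolding y_def by algebra
  finally have "Poly_Mapping.single m 1 = G * H * (Const \<kappa> * Const \<kappa>' * z) + lin_form 0 1 c * (p * y * z)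
      + lin_form 2 3 d * (Const \<kappa> * G * q * z)" .
  moreover have "Const \<kappa> * Const \<kappa>' * z \<in> Rring" "p * y * z \<in> Rring" "Const \<kappa> * G * q * z \<in> Rring"
    unfolding G_def H_def y_def z_def using p(1) q(1)
    by (auto intro!: Rring_add Rring_mult Rring_Const Rring_prod Rring_point_form Rring_lin_form Rring_monomial2)
  ultimately show ?thesis unfolding G_def H_def by blast
qed

subsection \<open>Ideals of points\<close>

lemma ideal_pts_0: "0 \<in> ideal_pts Y"
  by (auto simp: ideal_pts_def ideal_pt_def Rring_0 gen_ideal_0 split: prod.splits)

lemma ideal_pts_add: "f \<in> ideal_pts Y \<Longrightarrow> g \<in> ideal_pts Y \<Longrightarrow> f + g \<in> ideal_pts Y"
  by (auto simp: ideal_pts_def ideal_pt_def Rring_add gen_ideal_add split: prod.splits)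

lemma ideal_pts_mult: "c \<in> Rring \<Longrightarrow> f \<in> ideal_pts Y \<Longrightarrow> c * f \<in> ideal_pts Y"
  by (auto simp: ideal_pts_def ideal_pt_def Rring_mult gen_ideal_mult split: prod.splits)

lemma ideal_sum_ideal_pts_add:
  assumes "f \<in> ideal_sum (ideal_pts Y) (ideal_pts Z)" "g \<in> ideal_sum (ideal_pts Y) (ideal_pts Z)"
  shows "f + g \<in> ideal_sum (ideal_pts Y) (ideal_pts Z)"
proof -
  obtain f1 f2 g1 g2 where "f = f1 + f2" "g = g1 + g2" "f1 \<in> ideal_pts Y" "g1 \<in> ideal_pts Y"
    "f2 \<in> ideal_pts Z" "g2 \<in> ideal_pts Z"
    using assms by (auto simp: ideal_sum_def)
  moreover have "f1 + f2 + (g1 + g2) = (f1 + g1) + (f2 + g2)" by (simp add: ac_simps)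
  ultimately show ?thesis unfolding ideal_sum_def by (blast intro: ideal_pts_add)
qed

lemma ideal_sum_ideal_pts_mult:
  assumes "c \<in> Rring" "f \<in> ideal_sum (ideal_pts Y) (ideal_pts Z)"
  shows "c * f \<in> ideal_sum (ideal_pts Y) (ideal_pts Z)"
proof -
  obtain f1 f2 where "f = f1 + f2" "f1 \<in> ideal_pts Y" "f2 \<in> ideal_pts Z"
    using assms(2) by (auto simp: ideal_sum_def)
  thus ?thesis unfolding ideal_sum_def using assms(1)
    by (auto simp: distrib_left intro: ideal_pts_mult)
qed

lemma ideal_sum_ideal_pts_0: "0 \<in> ideal_sum (ideal_pts Y) (ideal_pts Z)"
  unfolding ideal_sum_def using ideal_pts_0 by force

lemma Rdeg_subset_ideal_sum_ideal_pts:
  fixes Y Z :: "'a::field pt3 set"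
  assumes "\<And>m. mono6 m \<Longrightarrow> tridegree m = \<delta> \<Longrightarrow>
    Poly_Mapping.single m 1 \<in> ideal_sum (ideal_pts Y) (ideal_pts Z)"
  shows "Rdeg \<delta> \<subseteq> ideal_sum (ideal_pts Y) (ideal_pts Z)"
proof
  fix F :: "'a mpoly6" assume F: "F \<in> Rdeg \<delta>"
  have sum: "sum f A \<in> ideal_sum (ideal_pts Y) (ideal_pts Z)"
    if "\<forall>x\<in>A. f x \<in> ideal_sum (ideal_pts Y) (ideal_pts Z)" for f and A :: "'b set"
    using that by (induction A rule: infinite_finite_induct)
      (auto intro: ideal_sum_ideal_pts_0 ideal_sum_ideal_pts_add)
  have "\<forall>m\<in>Poly_Mapping.keys F.
      Const (Poly_Mapping.lookup F m) * Poly_Mapping.single m 1 \<in> ideal_sum (ideal_pts Y) (ideal_pts Z)"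
    using F assms by (auto simp: Rdeg_def intro: ideal_sum_ideal_pts_mult Rring_Const)
  thus "F \<in> ideal_sum (ideal_pts Y) (ideal_pts Z)"
    by (subst poly_mapping_sum_monomials) (rule sum)
qed

lemma point_form_prod_in_gen_ideal:
  fixes a :: "'a::field \<times> 'a"
  assumes "finite Cs" "proj_class a \<in> Cs" "a \<noteq> (0,0)" "u < 6" "v < 6" "point_form u v a \<in> G"
  shows "(\<Prod>C\<in>Cs. point_form u v (class_rep C)) \<in> gen_ideal G"
proof -
  have "fst a * snd (class_rep (proj_class a)) = snd a * fst (class_rep (proj_class a))"
    using class_rep_mem[OF assms(3)] by (simp add: mem_proj_class_iff)
  then obtain \<mu> where "class_rep (proj_class a) = (\<mu> * fst a, \<mu> * snd a)"
    using proportional_if_cross_eq[OF assms(3)] by blast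
  hence "point_form u v (class_rep (proj_class a)) = Const \<mu> * point_form u v a"
    by (simp add: point_form_scale)
  moreover have "(\<Prod>C\<in>Cs. point_form u v (class_rep C))
      = point_form u v (class_rep (proj_class a)) * (\<Prod>C\<in>Cs - {proj_class a}. point_form u v (class_rep C))"
    by (rule prod.remove[OF assms(1,2)])
  ultimately have "(\<Prod>C\<in>Cs. point_form u v (class_rep C))
      = (Const \<mu> * (\<Prod>C\<in>Cs - {proj_class a}. point_form u v (class_rep C))) * point_form u v a"
    by (simp add: ac_simps)
  thus ?thesis
    using assms by (auto intro!: gen_ideal_generator_mult Rring_mult Rring_Const Rring_prod Rring_point_form)
qed

lemma lin_form_in_gen_ideal:
  fixes a c :: "'a::field \<times> 'a"
  assumes "a \<noteq> (0,0)" "lin_eval c a = 0" "point_form u v a \<in> G"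
  shows "lin_form u v c \<in> gen_ideal G"
proof -
  obtain \<kappa> where "c = (\<kappa> * snd a, - \<kappa> * fst a)"
    using annihilator_proportional[OF assms(1,2)] by blast
  hence "lin_form u v c = Const \<kappa> * point_form u v a"
    using lin_form_annihilator[of u v \<kappa> a] by simp
  thus ?thesis using assms(3) by (simp add: gen_ideal_generator_mult Rring_Const)
qed

lemma point_form_prods_mult_in_ideal_pts:
  fixes Y :: "'a::field pt3 set"
  assumes "\<forall>P\<in>Y. valid_pt P \<and> (pi1 P \<in> Cs1 \<or> pi2 P \<in> Cs2)" "finite Cs1" "finite Cs2" "r \<in> Rring"
  shows "(\<Prod>C\<in>Cs1. point_form 0 1 (class_rep C)) * (\<Prod>C\<in>Cs2. point_form 2 3 (class_rep C)) * r
    \<in> ideal_pts Y"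
proof -
  define G where "G = (\<Prod>C\<in>Cs1. point_form 0 1 (class_rep C) :: 'a mpoly6)"
  define H where "H = (\<Prod>C\<in>Cs2. point_form 2 3 (class_rep C) :: 'a mpoly6)"
  have R: "G \<in> Rring" "H \<in> Rring"
    unfolding G_def H_def by (auto intro!: Rring_prod Rring_point_form)
  have "G * H * r \<in> ideal_pt P" if "P \<in> Y" for P
  proof -
    have P: "fst P \<noteq> (0,0)" "fst (snd P) \<noteq> (0,0)" "pi1 P \<in> Cs1 \<or> pi2 P \<in> Cs2"
      using assms(1) that by (auto simp: valid_pt_def)
    from P(3) show ?thesis
    proof
      assume "pi1 P \<in> Cs1"
      hence "G \<in> ideal_pt P"
        unfolding G_def ideal_pt_eq_gen_ideal_point_forms
        using P(1) assms(2) by (intro point_form_prod_in_gen_ideal) (auto simp: pi1_def)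
      hence "(H * r) * G \<in> ideal_pt P"
        unfolding ideal_pt_eq_gen_ideal_point_forms using R assms(4) by (intro gen_ideal_mult Rring_mult)
      thus ?thesis by (simp add: ac_simps)
    next
      assume "pi2 P \<in> Cs2"
      hence "H \<in> ideal_pt P"
        unfolding H_def ideal_pt_eq_gen_ideal_point_forms
        using P(2) assms(3) by (intro point_form_prod_in_gen_ideal) (auto simp: pi2_def)
      hence "(G * r) * H \<in> ideal_pt P"
        unfolding ideal_pt_eq_gen_ideal_point_forms using R assms(4) by (intro gen_ideal_mult Rring_mult)
      thus ?thesis by (simp add: ac_simps)
    qed
  qed
  thus ?thesis
    unfolding G_def H_def ideal_pts_def using R assms(4) by (auto simp: G_def H_def intro: Rring_mult)
qed

lemma lin_forms_combination_in_ideal_pts: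
  fixes Y :: "'a::field pt3 set"
  assumes "\<forall>P\<in>Y. valid_pt P \<and> lin_eval c (fst P) = 0 \<and> lin_eval d (fst (snd P)) = 0"
    and "p \<in> Rring" "q \<in> Rring"
  shows "lin_form 0 1 c * p + lin_form 2 3 d * q \<in> ideal_pts Y"
proof -
  have "lin_form 0 1 c * p + lin_form 2 3 d * q \<in> ideal_pt P" if "P \<in> Y" for P
  proof -
    have "lin_form 0 1 c \<in> ideal_pt P" "lin_form 2 3 d \<in> ideal_pt P"
      unfolding ideal_pt_eq_gen_ideal_point_forms using assms(1) that
      by (auto simp: valid_pt_def intro: lin_form_in_gen_ideal[of "fst P"] lin_form_in_gen_ideal[of "fst (snd P)"])
    thus ?thesis
      unfolding ideal_pt_eq_gen_ideal_point_forms mult.commute[of _ p] mult.commute[of _ q]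
      using assms(2,3) by (intro gen_ideal_add gen_ideal_mult)
  qed
  moreover have "lin_form 0 1 c * p + lin_form 2 3 d * q \<in> Rring"
    using assms(2,3) by (intro Rring_add Rring_mult Rring_lin_form) auto
  ultimately show ?thesis unfolding ideal_pts_def by blast
qed

lemma Rdeg_subset_ideal_sum:
  fixes c d :: "'a::field \<times> 'a" and Y1 Y2 :: "'a pt3 set"
  assumes "finite Cs1" "\<forall>C\<in>Cs1. lin_eval c (class_rep C) \<noteq> 0"
    and "finite Cs2" "\<forall>C\<in>Cs2. lin_eval d (class_rep C) \<noteq> 0"
    and "\<forall>P\<in>Y1. valid_pt P \<and> (pi1 P \<in> Cs1 \<or> pi2 P \<in> Cs2)"
    and "\<forall>P\<in>Y2. valid_pt P \<and> lin_eval c (fst P) = 0 \<and> lin_eval d (fst (snd P)) = 0"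
  shows "Rdeg (card Cs1, card Cs2, k) \<subseteq> ideal_sum (ideal_pts Y1) (ideal_pts Y2)"
proof (rule Rdeg_subset_ideal_sum_ideal_pts)
  fix m assume "mono6 m" "tridegree m = (card Cs1, card Cs2, k)"
  then obtain r p q where rpq: "r \<in> Rring" "p \<in> Rring" "q \<in> Rring"
    "Poly_Mapping.single m 1
      = (\<Prod>C\<in>Cs1. point_form 0 1 (class_rep C)) * (\<Prod>C\<in>Cs2. point_form 2 3 (class_rep C)) * r
      + lin_form 0 1 c * p + lin_form 2 3 d * q"
    using monomial_in_lin_ideal[OF assms(1-4)] by blast
  thus "Poly_Mapping.single m 1 \<in> ideal_sum (ideal_pts Y1) (ideal_pts Y2)"
    unfolding ideal_sum_def add.assoc
    using point_form_prods_mult_in_ideal_pts[OF assms(5,1,3) rpq(1)]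
      lin_forms_combination_in_ideal_pts[OF assms(6) rpq(2,3)] by blast
qed

lemma mono6_of_degree_one:
  assumes "mono6 m" "Poly_Mapping.lookup m u + Poly_Mapping.lookup m v = 1"
    and "\<forall>k<6. k \<noteq> u \<and> k \<noteq> v \<longrightarrow> Poly_Mapping.lookup m k = 0"
  shows "m \<in> {Poly_Mapping.single u 1, Poly_Mapping.single v 1}"
proof -
  have zero: "Poly_Mapping.lookup m k = 0" if "k \<noteq> u" "k \<noteq> v" for k
    using assms(1,3) that by (cases "k < 6") (auto simp: mono6_def)
  consider "Poly_Mapping.lookup m u = 1" "Poly_Mapping.lookup m v = 0"
    | "Poly_Mapping.lookup m u = 0" "Poly_Mapping.lookup m v = 1"
    using assms(2) by linarith
  thus ?thesis
  proof cases
    case 1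
    hence "m = Poly_Mapping.single u 1"
      using zero by (intro poly_mapping_eqI) (metis lookup_single_eq lookup_single_not_eq)
    thus ?thesis by simp
  next
    case 2
    hence "m = Poly_Mapping.single v 1"
      using zero by (intro poly_mapping_eqI) (metis lookup_single_eq lookup_single_not_eq)
    thus ?thesis by simp
  qed
qed

lemma coord_simps:
  "coord P 0 = fst (fst P)" "coord P 1 = snd (fst P)"
  "coord P 2 = fst (fst (snd P))" "coord P 3 = snd (fst (snd P))"
  by (auto simp: coord_def split: prod.splits)

lemma lin_form_of_keys:
  fixes L :: "'a::comm_ring_1 mpoly6"
  assumes "Poly_Mapping.keys L \<subseteq> {Poly_Mapping.single u 1, Poly_Mapping.single v 1}" "u \<noteq> v"
  defines "c \<equiv> (Poly_Mapping.lookup L (Poly_Mapping.single u 1), Poly_Mapping.lookup L (Poly_Mapping.single v 1))"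
  shows "L = lin_form u v c" "eval_pt L P = fst c * coord P u + snd c * coord P v"
proof -
  have ne: "Poly_Mapping.single u (1::nat) \<noteq> Poly_Mapping.single v 1"
    using assms(2) by (metis lookup_single_eq lookup_single_not_eq zero_neq_one)
  have outside: "Poly_Mapping.lookup L m = 0" if "m \<notin> {Poly_Mapping.single u 1, Poly_Mapping.single v 1}" for m
    using assms(1) that by (auto simp: in_keys_iff)
  show "L = lin_form u v c"
    by (rule poly_mapping_eqI)
       (use ne outside in \<open>auto simp: c_def lin_form_def lookup_add lookup_Const_mult lookup_Var\<close>)
  have "eval_pt L P = (\<Sum>m\<in>{Poly_Mapping.single u 1, Poly_Mapping.single v 1}.
      Poly_Mapping.lookup L m * (\<Prod>i\<in>Poly_Mapping.keys m. coord P i ^ Poly_Mapping.lookup m i))"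
    unfolding eval_pt_def by (rule sum.mono_neutral_left) (use assms(1) in \<open>auto simp: in_keys_iff\<close>)
  thus "eval_pt L P = fst c * coord P u + snd c * coord P v"
    using ne by (simp add: c_def)
qed

lemma Rdeg_100_eq_lin_form:
  fixes L :: "'a::field mpoly6"
  assumes "L \<in> Rdeg (1,0,0)" "L \<noteq> 0"
  obtains c where "c \<noteq> (0,0)" "L = lin_form 0 1 c" "\<And>P. eval_pt L P = lin_eval c (fst P)"
proof -
  define c where "c = (Poly_Mapping.lookup L (Poly_Mapping.single 0 1), Poly_Mapping.lookup L (Poly_Mapping.single 1 1))"
  have "Poly_Mapping.keys L \<subseteq> {Poly_Mapping.single 0 1, Poly_Mapping.single 1 1}"
  proof
    fix m assume "m \<in> Poly_Mapping.keys L"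
    hence "mono6 m" "tridegree m = (1,0,0)" using assms(1) by (auto simp: Rdeg_def)
    thus "m \<in> {Poly_Mapping.single 0 1, Poly_Mapping.single 1 1}"
      by (intro mono6_of_degree_one) (auto simp: tridegree_def dest!: less_6_cases)
  qed
  note keys = lin_form_of_keys[OF this, unfolded coord_simps, folded c_def]
  have "L = lin_form 0 1 c" "\<And>P. eval_pt L P = lin_eval c (fst P)"
    using keys by simp_all
  moreover have "c \<noteq> (0,0)" using calculation(1) assms(2) by auto
  ultimately show ?thesis using that by blast
qed

lemma Rdeg_010_eq_lin_form:
  fixes L :: "'a::field mpoly6"
  assumes "L \<in> Rdeg (0,1,0)" "L \<noteq> 0"
  obtains c where "c \<noteq> (0,0)" "L = lin_form 2 3 c" "\<And>P. eval_pt L P = lin_eval c (fst (snd P))"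
proof -
  define c where "c = (Poly_Mapping.lookup L (Poly_Mapping.single 2 1), Poly_Mapping.lookup L (Poly_Mapping.single 3 1))"
  have "Poly_Mapping.keys L \<subseteq> {Poly_Mapping.single 2 1, Poly_Mapping.single 3 1}"
  proof
    fix m assume "m \<in> Poly_Mapping.keys L"
    hence "mono6 m" "tridegree m = (0,1,0)" using assms(1) by (auto simp: Rdeg_def)
    thus "m \<in> {Poly_Mapping.single 2 1, Poly_Mapping.single 3 1}"
      by (intro mono6_of_degree_one) (auto simp: tridegree_def dest!: less_6_cases)
  qed
  note keys = lin_form_of_keys[OF this, unfolded coord_simps, folded c_def]
  have "L = lin_form 2 3 c" "\<And>P. eval_pt L P = lin_eval c (fst (snd P))"
    using keys by simp_all
  moreover have "c \<noteq> (0,0)" using calculation(1) assms(2) by auto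
  ultimately show ?thesis using that by blast
qed

theorem lemma2p7:
  fixes X :: "'a::{alg_closed_field, field_char_0} pt3 set"
    and L L' :: "'a mpoly6"
  assumes finX: "finite X"
    and valid: "\<forall>P\<in>X. valid_pt P"
    and distinct: "\<forall>P\<in>X. \<forall>Q\<in>X. same_pt P Q \<longrightarrow> P = Q"
    and L: "L \<in> Rdeg (1,0,0)" "L \<noteq> 0"
    and L': "L' \<in> Rdeg (0,1,0)" "L' \<noteq> 0"
    and meets: "{P\<in>X. eval_pt L P = 0 \<and> eval_pt L' P = 0} \<noteq> {}"
    and notin: "\<not> X \<subseteq> {P. eval_pt L P = 0 \<and> eval_pt L' P = 0}"
  shows "let t1 = card (pi1 ` X); t2 = card (pi2 ` X);
             X2 = {P\<in>X. eval_pt L P = 0 \<and> eval_pt L' P = 0};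
             X1 = X - X2;
             J = ideal_sum (ideal_pts X1) (ideal_pts X2)
         in Rdeg (t1 - 1, t2 - 1, 0) = J \<inter> Rdeg (t1 - 1, t2 - 1, 0)
            \<and> (\<forall>k. J \<inter> Rdeg (t1 - 1, t2 - 1, k) = Rdeg (t1 - 1, t2 - 1, k))"
proof -
  obtain c where c: "c \<noteq> (0,0)" "\<And>P. eval_pt L P = lin_eval c (fst P)"
    using Rdeg_100_eq_lin_form[OF L] by metis
  obtain d where d: "d \<noteq> (0,0)" "\<And>P. eval_pt L' P = lin_eval d (fst (snd P))"
    using Rdeg_010_eq_lin_form[OF L'] by metis
  define X2 where "X2 = {P\<in>X. eval_pt L P = 0 \<and> eval_pt L' P = 0}"
  obtain P0 where P0: "P0 \<in> X" "lin_eval c (fst P0) = 0" "lin_eval d (fst (snd P0)) = 0"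
    using meets c d by auto
  define Cs1 where "Cs1 = proj_class ` fst ` X - {proj_class (fst P0)}"
  define Cs2 where "Cs2 = proj_class ` fst ` snd ` X - {proj_class (fst (snd P0))}"
  have "(0,0) \<notin> fst ` X" "(0,0) \<notin> fst ` snd ` X"
    using valid by (auto simp: valid_pt_def)
  moreover have "fst P0 \<in> fst ` X" "fst (snd P0) \<in> fst ` snd ` X"
    using P0(1) by auto
  ultimately have sep1: "\<forall>C\<in>Cs1. lin_eval c (class_rep C) \<noteq> 0"
      "\<forall>P\<in>X. lin_eval c (fst P) \<noteq> 0 \<longrightarrow> pi1 P \<in> Cs1"
    and sep2: "\<forall>C\<in>Cs2. lin_eval d (class_rep C) \<noteq> 0"
      "\<forall>P\<in>X. lin_eval d (fst (snd P)) \<noteq> 0 \<longrightarrow> pi2 P \<in> Cs2"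
    using lin_eval_separates_classes[OF c(1), of "fst ` X" "fst P0"]
      lin_eval_separates_classes[OF d(1), of "fst ` snd ` X" "fst (snd P0)"] P0
    unfolding Cs1_def Cs2_def pi1_def pi2_def by auto
  have "\<forall>P\<in>X - X2. valid_pt P \<and> (pi1 P \<in> Cs1 \<or> pi2 P \<in> Cs2)"
    using valid sep1(2) sep2(2) by (auto simp: X2_def c d)
  moreover have "\<forall>P\<in>X2. valid_pt P \<and> lin_eval c (fst P) = 0 \<and> lin_eval d (fst (snd P)) = 0"
    using valid c d by (auto simp: X2_def)
  moreover have "finite Cs1" "finite Cs2"
    using finX by (simp_all add: Cs1_def Cs2_def)
  ultimately have "Rdeg (card Cs1, card Cs2, k) \<subseteq> ideal_sum (ideal_pts (X - X2)) (ideal_pts X2)" for k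
    using Rdeg_subset_ideal_sum sep1(1) sep2(1) by blast
  moreover have "card Cs1 = card (pi1 ` X) - 1" "card Cs2 = card (pi2 ` X) - 1"
    using P0 finX by (simp_all add: Cs1_def Cs2_def pi1_def pi2_def image_image card_Diff_singleton)
  ultimately have "Rdeg (card (pi1 ` X) - 1, card (pi2 ` X) - 1, k)
      \<subseteq> ideal_sum (ideal_pts (X - X2)) (ideal_pts X2)" for k
    by simp
  thus ?thesis
    unfolding Let_def X2_def[symmetric] by (simp add: inf.absorb2)
qed

end
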